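(* Let $0<p,q,r\le\infty$ with $\frac1p+\frac1q=\frac1r$, let $\alpha=(\alpha_1,\dots,\alpha_N)$ be an $N$-tuple of pairwise distinct vectors in $\mathbb{R}^n$, and let $\rho>0$. For vector-valued functions $f=(f_1,\dots,f_N)$, $g=(g_1,\dots,g_N)$ on $\mathbb{R}^n$ define $$S_{\alpha,\rho}(f,g)(x)=\big(f_1(x+\rho\alpha_1)g_1(x-\alpha_1),\ \dots,\ f_N(x+\rho\alpha_N)g_N(x-\alpha_N)\big).$$ Then the norm of $S_{\alpha,\rho}$ as a bilinear operator from $L^p(\ell^2)\times L^q(\ell^2)$ to $L^r(\ell^2)$ satisfies $$\|S_{\alpha,\rho}\|_{L^p(\ell^2)\times L^q(\ell^2)\to L^r(\ell^2)}\ \ge\ \max\{N^{1/p-1/2},\,N^{1/q-1/2}\}.$$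
   Context: For $h=(h_1,\dots,h_N)$, $\|h\|_{L^s(\ell^2)}=\big\|\big(\sum_{k=1}^N|h_k|^2\big)^{1/2}\big\|_{L^s(\mathbb{R}^n)}$. The operator norm is the supremum of $\|S_{\alpha,\rho}(f,g)\|_{L^r(\ell^2)}$ over $f,g$ with $\|f\|_{L^p(\ell^2)}=\|g\|_{L^q(\ell^2)}=1$ (possibly $+\infty$). *)

theory Defs
  imports "HOL-Analysis.Analysis" "HOL-Probability.Essential_Supremum"
begin

definition inv_exp :: "ereal \<Rightarrow> real" where
  "inv_exp s = (if s = \<infinity> then 0 else 1 / real_of_ereal s)"

definition ell2_fun :: "nat \<Rightarrow> (nat \<Rightarrow> real^'n \<Rightarrow> complex) \<Rightarrow> real^'n \<Rightarrow> real" where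
  "ell2_fun N h x = sqrt (\<Sum>k<N. (cmod (h k x))^2)"

definition Ls_norm :: "ereal \<Rightarrow> (real^'n \<Rightarrow> real) \<Rightarrow> ereal" where
  "Ls_norm s F =
     (if s = \<infinity> then esssup lebesgue (\<lambda>x. ereal (F x))
      else (let I = (\<integral>\<^sup>+ x. ennreal (F x powr real_of_ereal s) \<partial>lebesgue)
            in if I = \<infinity> then \<infinity> else ereal (enn2real I powr (1 / real_of_ereal s))))"

definition Lp_ell2_norm :: "ereal \<Rightarrow> nat \<Rightarrow> (nat \<Rightarrow> real^'n \<Rightarrow> complex) \<Rightarrow> ereal" where
  "Lp_ell2_norm s N h = Ls_norm s (ell2_fun N h)"

definition S_op :: "(nat \<Rightarrow> real^'n) \<Rightarrow> real \<Rightarrow> (nat \<Rightarrow> real^'n \<Rightarrow> complex)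
     \<Rightarrow> (nat \<Rightarrow> real^'n \<Rightarrow> complex) \<Rightarrow> nat \<Rightarrow> real^'n \<Rightarrow> complex" where
  "S_op \<alpha> \<rho> f g k x = f k (x + \<rho> *\<^sub>R \<alpha> k) * g k (x - \<alpha> k)"

definition S_opnorm :: "ereal \<Rightarrow> ereal \<Rightarrow> ereal \<Rightarrow> nat \<Rightarrow> (nat \<Rightarrow> real^'n) \<Rightarrow> real \<Rightarrow> ereal" where
  "S_opnorm p q r N \<alpha> \<rho> = Sup {Lp_ell2_norm r N (S_op \<alpha> \<rho> f g) | f g.
      (\<forall>k<N. f k \<in> borel_measurable lebesgue \<and> g k \<in> borel_measurable lebesgue) \<and>
      Lp_ell2_norm p N f = 1 \<and> Lp_ell2_norm q N g = 1}"

end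

theory Submission
  imports Defs
begin

text \<open>Test the operator on indicators of balls of a small radius and volume \<open>V\<close>. Let every
  \<open>f\<^sub>k\<close> be the indicator of one ball and \<open>g\<^sub>k\<close> that of the ball around \<open>-(1+\<rho>)\<alpha>\<^sub>k\<close>, so
  that the \<open>k\<close>-th component of \<open>S(f,g)\<close> is the indicator of the ball around \<open>-\<rho>\<alpha>\<^sub>k\<close>. For
  distinct \<open>\<alpha>\<^sub>k\<close> and a small radius these \<open>N\<close> balls are disjoint, hence
  \<open>\<parallel>S(f,g)\<parallel>\<^sub>r = (NV)\<^bsup>1/r\<^esup>\<close> and \<open>\<parallel>g\<parallel>\<^sub>q = (NV)\<^bsup>1/q\<^esup>\<close>, whereas the \<open>l\<^sup>2\<close> sum of \<open>N\<close> equal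
  entries gives \<open>\<parallel>f\<parallel>\<^sub>p = \<surd>N V\<^bsup>1/p\<^esup>\<close>. As \<open>1/p + 1/q = 1/r\<close>, the quotient
  \<open>\<parallel>S(f,g)\<parallel>\<^sub>r / (\<parallel>f\<parallel>\<^sub>p \<parallel>g\<parallel>\<^sub>q)\<close> is \<open>N\<^bsup>1/p - 1/2\<^esup>\<close>. Exchanging the roles of \<open>f\<close> and
  \<open>g\<close> gives \<open>N\<^bsup>1/q - 1/2\<^esup>\<close>.\<close>

lemma Ls_norm_indicator:
  fixes U :: "(real^'n) set"
  assumes U: "U \<in> sets lebesgue" "0 < emeasure lebesgue U" "emeasure lebesgue U < \<infinity>"
    and s: "s > 0"
  shows "Ls_norm s (indicator U) = ereal (measure lebesgue U powr inv_exp s)"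
proof -
  have emeasure_U: "emeasure lebesgue U = ennreal (measure lebesgue U)"
    using U(3) by (simp add: emeasure_eq_ennreal_measure)
  have measure_pos: "measure lebesgue U > 0"
    using U(2) emeasure_U by (metis ennreal_less_zero_iff measure_nonneg order_le_less)
  show ?thesis
  proof (cases "s = \<infinity>")
    case True
    have "esssup lebesgue (\<lambda>x. ereal (indicator U x)) = 1"
    proof (rule antisym)
      show "esssup lebesgue (\<lambda>x. ereal (indicator U x)) \<le> 1"
        using U(1) by (intro esssup_I) (auto simp: indicator_def)
      show "1 \<le> esssup lebesgue (\<lambda>x. ereal (indicator U x))"
      proof (rule ccontr)
        assume "\<not> 1 \<le> esssup lebesgue (\<lambda>x. ereal (indicator U x))"
        with esssup_AE[of "\<lambda>x. ereal (indicator U x)" lebesgue]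
        have "AE x in lebesgue. x \<notin> U"
          by (auto elim!: eventually_mono simp: indicator_def one_ereal_def)
        then show False
          using U(2) by (simp add: AE_iff_measurable[OF U(1)])
      qed
    qed
    then show ?thesis
      using True measure_pos by (simp add: Ls_norm_def inv_exp_def)
  next
    case False
    then obtain t where t: "s = ereal t" "t > 0"
      using s by (cases s) auto
    have "(\<lambda>x. ennreal (indicator U x powr t)) = indicator U"
      by (auto simp: indicator_def)
    then have "(\<integral>\<^sup>+ x. ennreal (indicator U x powr t) \<partial>lebesgue) = emeasure lebesgue U"
      using U(1) by simp
    then show ?thesis
      using t measure_pos by (simp add: Ls_norm_def inv_exp_def emeasure_U)
  qed
qed

lemma Ls_norm_cmult:
  fixes F :: "real^'n \<Rightarrow> real"
  assumes F: "F \<in> borel_measurable lebesgue" "\<And>x. F x \<ge> 0"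
    and c: "c > 0" and s: "s > 0"
  shows "Ls_norm s (\<lambda>x. c * F x) = ereal c * Ls_norm s F"
proof (cases "s = \<infinity>")
  case True
  then show ?thesis
    using esssup_cmult[OF c, of lebesgue "\<lambda>x. ereal (F x)"] by (simp add: Ls_norm_def)
next
  case False
  then obtain t where t: "s = ereal t" "t > 0"
    using s by (cases s) auto
  define I where "I = (\<integral>\<^sup>+ x. ennreal (F x powr t) \<partial>lebesgue)"
  have "(\<integral>\<^sup>+ x. ennreal ((c * F x) powr t) \<partial>lebesgue)
      = (\<integral>\<^sup>+ x. ennreal (c powr t) * ennreal (F x powr t) \<partial>lebesgue)"
    using c F(2) by (simp add: powr_mult ennreal_mult)
  also have "\<dots> = ennreal (c powr t) * I"
    unfolding I_def using F(1) by (intro nn_integral_cmult) measurable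
  finally have scaled: "(\<integral>\<^sup>+ x. ennreal ((c * F x) powr t) \<partial>lebesgue) = ennreal (c powr t) * I" .
  show ?thesis
  proof (cases "I = \<infinity>")
    case True
    then show ?thesis
      using t c scaled by (simp add: Ls_norm_def I_def ennreal_mult_top)
  next
    case False
    have "(c powr t * enn2real I) powr (1 / t) = c * enn2real I powr (1 / t)"
      using c t by (simp add: powr_mult powr_powr)
    then show ?thesis
      using t c scaled False
      by (simp add: Ls_norm_def I_def enn2real_mult ennreal_mult_eq_top_iff)
  qed
qed

lemma ell2_fun_nonneg: "ell2_fun N h x \<ge> 0"
  by (simp add: ell2_fun_def sum_nonneg)

lemma borel_measurable_ell2_fun:
  assumes "\<And>k. k < N \<Longrightarrow> h k \<in> borel_measurable lebesgue"
  shows "ell2_fun N h \<in> borel_measurable lebesgue"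
  unfolding ell2_fun_def using assms by measurable

lemma ell2_fun_cmult: "ell2_fun N (\<lambda>k x. c * h k x) = (\<lambda>x. cmod c * ell2_fun N h x)"
  by (rule ext) (simp add: ell2_fun_def norm_mult power_mult_distrib sum_distrib_left[symmetric] real_sqrt_mult)

lemma Lp_ell2_norm_cmult:
  assumes "\<And>k. k < N \<Longrightarrow> h k \<in> borel_measurable lebesgue" "c \<noteq> 0" "s > 0"
  shows "Lp_ell2_norm s N (\<lambda>k x. c * h k x) = ereal (cmod c) * Lp_ell2_norm s N h"
proof -
  have "Ls_norm s (\<lambda>x. cmod c * ell2_fun N h x) = ereal (cmod c) * Ls_norm s (ell2_fun N h)"
    using assms by (intro Ls_norm_cmult borel_measurable_ell2_fun ell2_fun_nonneg) auto
  then show ?thesis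
    by (simp add: Lp_ell2_norm_def ell2_fun_cmult)
qed

lemma ell2_fun_disjoint_indicators:
  assumes "disjoint_family_on U {..<N}" "\<And>k. k < N \<Longrightarrow> h k = indicator (U k)"
  shows "ell2_fun N h = indicator (\<Union>k<N. U k)"
proof
  fix x
  have "(\<Sum>k<N. (cmod (h k x))\<^sup>2) = (\<Sum>k<N. indicator (U k) x)"
    using assms(2) by (intro sum.cong) (auto simp: indicator_def)
  also have "\<dots> = indicator (\<Union>k<N. U k) x"
    by (simp add: indicator_UN_disjoint[OF _ assms(1)])
  finally show "ell2_fun N h x = indicator (\<Union>k<N. U k) x"
    by (simp add: ell2_fun_def indicator_def)
qed

lemma ell2_fun_common_indicator:
  assumes "\<And>k. k < N \<Longrightarrow> h k = indicator U"
  shows "ell2_fun N h = (\<lambda>x. sqrt (real N) * indicator U x)"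
proof
  fix x
  have "(\<Sum>k<N. (cmod (h k x))\<^sup>2) = real N * indicator U x"
    using assms by (simp add: indicator_def)
  then show "ell2_fun N h x = sqrt (real N) * indicator U x"
    by (simp add: ell2_fun_def indicator_def)
qed

lemma lebesgue_measurable_translation:
  "(\<lambda>x::'a::euclidean_space. x + t) \<in> lebesgue \<rightarrow>\<^sub>M lebesgue"
  using lebesgue_affine_measurable[of "\<lambda>_. 1" t]
  by (simp add: euclidean_representation add.commute)

lemma borel_measurable_S_op:
  assumes "f k \<in> borel_measurable lebesgue" "g k \<in> borel_measurable lebesgue"
  shows "S_op \<alpha> \<rho> f g k \<in> borel_measurable lebesgue"
proof -
  have "(\<lambda>x. f k (x + \<rho> *\<^sub>R \<alpha> k)) \<in> borel_measurable lebesgue"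
    by (rule measurable_compose[OF lebesgue_measurable_translation assms(1)])
  moreover have "(\<lambda>x. g k (x + - \<alpha> k)) \<in> borel_measurable lebesgue"
    by (rule measurable_compose[OF lebesgue_measurable_translation assms(2)])
  ultimately show ?thesis
    unfolding S_op_def by simp
qed

lemma S_opnorm_ge_ratio:
  assumes f: "\<And>k. k < N \<Longrightarrow> f k \<in> borel_measurable lebesgue" "Lp_ell2_norm p N f = ereal P" "P > 0"
    and g: "\<And>k. k < N \<Longrightarrow> g k \<in> borel_measurable lebesgue" "Lp_ell2_norm q N g = ereal Q" "Q > 0"
    and pqr: "p > 0" "q > 0" "r > 0"
  shows "ereal (1 / (P * Q)) * Lp_ell2_norm r N (S_op \<alpha> \<rho> f g) \<le> S_opnorm p q r N \<alpha> \<rho>"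
proof -
  define f' where "f' = (\<lambda>k x. complex_of_real (1 / P) * f k x)"
  define g' where "g' = (\<lambda>k x. complex_of_real (1 / Q) * g k x)"
  have "Lp_ell2_norm p N f' = 1"
    using f pqr Lp_ell2_norm_cmult[of N f "complex_of_real (1 / P)" p] by (simp add: f'_def norm_divide)
  moreover have "Lp_ell2_norm q N g' = 1"
    using g pqr Lp_ell2_norm_cmult[of N g "complex_of_real (1 / Q)" q] by (simp add: g'_def norm_divide)
  moreover have "\<forall>k<N. f' k \<in> borel_measurable lebesgue \<and> g' k \<in> borel_measurable lebesgue"
    using f g by (simp add: f'_def g'_def)
  ultimately have "Lp_ell2_norm r N (S_op \<alpha> \<rho> f' g') \<le> S_opnorm p q r N \<alpha> \<rho>"
    unfolding S_opnorm_def by (blast intro: Sup_upper)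
  moreover have "S_op \<alpha> \<rho> f' g' = (\<lambda>k x. complex_of_real (1 / (P * Q)) * S_op \<alpha> \<rho> f g k x)"
    by (simp add: S_op_def f'_def g'_def fun_eq_iff)
  moreover have "Lp_ell2_norm r N (\<lambda>k x. complex_of_real (1 / (P * Q)) * S_op \<alpha> \<rho> f g k x)
      = ereal (1 / (P * Q)) * Lp_ell2_norm r N (S_op \<alpha> \<rho> f g)"
    using f g pqr Lp_ell2_norm_cmult[of N "S_op \<alpha> \<rho> f g" "complex_of_real (1 / (P * Q))" r]
    by (simp add: borel_measurable_S_op norm_divide norm_mult)
  ultimately show ?thesis
    by simp
qed

lemma obtain_separation_radius:
  fixes \<alpha> :: "'i \<Rightarrow> 'a::real_normed_vector"
  assumes "finite I" "inj_on \<alpha> I" "\<delta> > 0"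
  obtains e where "e > 0"
    "\<And>i j c. i \<in> I \<Longrightarrow> j \<in> I \<Longrightarrow> i \<noteq> j \<Longrightarrow> \<delta> \<le> \<bar>c\<bar> \<Longrightarrow> 2 * e \<le> dist (c *\<^sub>R \<alpha> i) (c *\<^sub>R \<alpha> j)"
proof
  define D where "D = (\<lambda>(i, j). dist (\<alpha> i) (\<alpha> j)) ` {(i, j) \<in> I \<times> I. i \<noteq> j}"
  define d where "d = Min (insert 1 D)"
  have "finite D"
    by (rule finite_subset[of _ "(\<lambda>(i, j). dist (\<alpha> i) (\<alpha> j)) ` (I \<times> I)"])
      (use assms(1) in \<open>auto simp: D_def\<close>)
  moreover have "\<forall>x\<in>D. x > 0"
    using assms(2) by (auto simp: D_def inj_on_def)
  ultimately have d_pos: "d > 0"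
    by (simp add: d_def)
  have d_le: "d \<le> dist (\<alpha> i) (\<alpha> j)" if "i \<in> I" "j \<in> I" "i \<noteq> j" for i j
  proof -
    have "dist (\<alpha> i) (\<alpha> j) \<in> D"
      unfolding D_def using that by (intro image_eqI[where x = "(i, j)"]) auto
    then show ?thesis
      unfolding d_def using \<open>finite D\<close> by (intro Min_le) auto
  qed
  show "\<delta> * d / 2 > 0"
    using assms(3) d_pos by simp
  fix i j and c :: real
  assume "i \<in> I" "j \<in> I" "i \<noteq> j" "\<delta> \<le> \<bar>c\<bar>"
  then have "\<delta> * d \<le> \<bar>c\<bar> * dist (\<alpha> i) (\<alpha> j)"
    using assms(3) d_pos d_le by (intro mult_mono) auto
  also have "\<dots> = dist (c *\<^sub>R \<alpha> i) (c *\<^sub>R \<alpha> j)"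
    by (simp add: dist_norm scaleR_diff_right[symmetric])
  finally show "2 * (\<delta> * d / 2) \<le> dist (c *\<^sub>R \<alpha> i) (c *\<^sub>R \<alpha> j)"
    by simp
qed

lemma disjoint_family_on_separated_balls:
  assumes "\<And>i j. i \<in> I \<Longrightarrow> j \<in> I \<Longrightarrow> i \<noteq> j \<Longrightarrow> 2 * e \<le> dist (z i) (z j)"
  shows "disjoint_family_on (\<lambda>k. ball (z k) e) I"
  unfolding disjoint_family_on_def
proof (intro ballI impI equals0I)
  fix i j y
  assume "i \<in> I" "j \<in> I" "i \<noteq> j" "y \<in> ball (z i) e \<inter> ball (z j) e"
  then have "dist (z i) (z j) < 2 * e" "2 * e \<le> dist (z i) (z j)"
    using assms dist_triangle_less_add[of "z i" y e "z j" e] by (auto simp: dist_commute)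
  then show False
    by simp
qed

lemma Lp_ell2_norm_separated_balls:
  fixes z :: "nat \<Rightarrow> real^'n"
  assumes "e > 0" "N \<ge> 1" "s > 0"
    and sep: "\<And>i j. i < N \<Longrightarrow> j < N \<Longrightarrow> i \<noteq> j \<Longrightarrow> 2 * e \<le> dist (z i) (z j)"
    and h: "\<And>k. k < N \<Longrightarrow> h k = indicator (ball (z k) e)"
  shows "Lp_ell2_norm s N h = ereal ((real N * measure lebesgue (ball (0::real^'n) e)) powr inv_exp s)"
proof -
  define U where "U = (\<Union>k<N. ball (z k) e)"
  have disjoint: "disjoint_family_on (\<lambda>k. ball (z k) e) {..<N}"
    using sep by (intro disjoint_family_on_separated_balls) auto
  have "emeasure lebesgue U = (\<Sum>k<N. emeasure lebesgue (ball (z k) e))"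
    unfolding U_def using disjoint by (intro sum_emeasure[symmetric]) auto
  also have "\<dots> = ennreal (real N * measure lebesgue (ball (0::real^'n) e))"
    using assms(1) by (simp add: emeasure_eq_measure2 content_ball ennreal_of_nat_eq_real_of_nat ennreal_mult)
  finally have emeasure_U: "emeasure lebesgue U = ennreal (real N * measure lebesgue (ball (0::real^'n) e))" .
  have "Ls_norm s (indicator U) = ereal (measure lebesgue U powr inv_exp s)"
    using assms(1-3) emeasure_U by (intro Ls_norm_indicator) (auto simp: U_def)
  then show ?thesis
    using emeasure_U ell2_fun_disjoint_indicators[OF disjoint h]
    by (simp add: Lp_ell2_norm_def U_def measure_def)
qed

lemma Lp_ell2_norm_common_ball:
  fixes z :: "real^'n"
  assumes "e > 0" "N \<ge> 1" "s > 0"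
    and h: "\<And>k. k < N \<Longrightarrow> h k = indicator (ball z e)"
  shows "Lp_ell2_norm s N h = ereal (sqrt (real N) * measure lebesgue (ball (0::real^'n) e) powr inv_exp s)"
proof -
  have "Ls_norm s (indicator (ball z e)) = ereal (measure lebesgue (ball (0::real^'n) e) powr inv_exp s)"
    using assms(1,3) by (simp add: Ls_norm_indicator emeasure_eq_measure2 content_ball)
  moreover have "Ls_norm s (\<lambda>x. sqrt (real N) * indicator (ball z e) x)
      = ereal (sqrt (real N)) * Ls_norm s (indicator (ball z e))"
    using assms(2,3) by (intro Ls_norm_cmult borel_measurable_indicator) auto
  ultimately show ?thesis
    by (simp add: Lp_ell2_norm_def ell2_fun_common_indicator[OF h])
qed

lemma S_op_indicator_balls:
  assumes "u k = w k + \<rho> *\<^sub>R \<alpha> k" "v k = w k - \<alpha> k"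
  shows "S_op \<alpha> \<rho> (\<lambda>k. indicator (ball (u k) e)) (\<lambda>k. indicator (ball (v k) e)) k
    = (indicator (ball (w k) e) :: real^'n \<Rightarrow> complex)"
proof
  fix x
  have "x + \<rho> *\<^sub>R \<alpha> k \<in> ball (u k) e \<longleftrightarrow> x \<in> ball (w k) e"
    "x - \<alpha> k \<in> ball (v k) e \<longleftrightarrow> x \<in> ball (w k) e"
    using assms by (simp_all add: dist_norm algebra_simps)
  then show "S_op \<alpha> \<rho> (\<lambda>k. indicator (ball (u k) e)) (\<lambda>k. indicator (ball (v k) e)) k x
      = indicator (ball (w k) e) x"
    by (simp add: S_op_def indicator_def)
qed

lemma S_opnorm_ge_balls:
  fixes u v w :: "nat \<Rightarrow> real^'n"
  assumes "p > 0" "q > 0" "r > 0" "N \<ge> 1" "e > 0"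
    and uvw: "\<And>k. u k = w k + \<rho> *\<^sub>R \<alpha> k" "\<And>k. v k = w k - \<alpha> k"
    and sep: "\<And>i j. i < N \<Longrightarrow> j < N \<Longrightarrow> i \<noteq> j \<Longrightarrow> 2 * e \<le> dist (w i) (w j)"
    and P: "Lp_ell2_norm p N (\<lambda>k. indicator (ball (u k) e)) = ereal P" "P > 0"
    and Q: "Lp_ell2_norm q N (\<lambda>k. indicator (ball (v k) e)) = ereal Q" "Q > 0"
  shows "ereal ((real N * measure lebesgue (ball (0::real^'n) e)) powr inv_exp r / (P * Q))
    \<le> S_opnorm p q r N \<alpha> \<rho>"
proof -
  have "S_op \<alpha> \<rho> (\<lambda>k. indicator (ball (u k) e)) (\<lambda>k. indicator (ball (v k) e)) k = indicator (ball (w k) e)" for k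
    using uvw by (rule S_op_indicator_balls)
  then have "Lp_ell2_norm r N (S_op \<alpha> \<rho> (\<lambda>k. indicator (ball (u k) e)) (\<lambda>k. indicator (ball (v k) e)))
      = ereal ((real N * measure lebesgue (ball (0::real^'n) e)) powr inv_exp r)"
    using assms by (intro Lp_ell2_norm_separated_balls) auto
  moreover have "ereal (1 / (P * Q)) * Lp_ell2_norm r N (S_op \<alpha> \<rho> (\<lambda>k. indicator (ball (u k) e)) (\<lambda>k. indicator (ball (v k) e)))
      \<le> S_opnorm p q r N \<alpha> \<rho>"
    using assms by (intro S_opnorm_ge_ratio) (auto simp: borel_measurable_indicator)
  ultimately show ?thesis
    by simp
qed

lemma powr_ratio_sqrt:
  fixes N V x y :: real
  assumes "N > 0" "V > 0"
  shows "(N * V) powr (x + y) / (sqrt N * V powr x * (N * V) powr y) = N powr (x - 1/2)"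
proof -
  have "sqrt N = N powr (1/2)"
    using assms by (simp add: powr_half_sqrt)
  moreover have "N powr x = N powr (1/2) * N powr (x - 1/2)"
    by (simp add: powr_add[symmetric])
  ultimately show ?thesis
    using assms by (simp add: powr_add powr_mult field_simps)
qed

lemma S_opnorm_lower_bound_p:
  fixes \<alpha> :: "nat \<Rightarrow> real^'n"
  assumes pqr: "p > 0" "q > 0" "r > 0" "inv_exp p + inv_exp q = inv_exp r"
    and N: "N \<ge> 1" and inj: "inj_on \<alpha> {..<N}" and \<rho>: "\<rho> > 0"
  shows "ereal (real N powr (inv_exp p - 1/2)) \<le> S_opnorm p q r N \<alpha> \<rho>"
proof -
  obtain e where e: "e > 0" and sep: "\<And>i j c. i < N \<Longrightarrow> j < N \<Longrightarrow> i \<noteq> j \<Longrightarrow> min 1 \<rho> \<le> \<bar>c\<bar> \<Longrightarrow>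
      2 * e \<le> dist (c *\<^sub>R \<alpha> i) (c *\<^sub>R \<alpha> j)"
    using obtain_separation_radius[of "{..<N}" \<alpha> "min 1 \<rho>"] inj \<rho> by auto
  define V where "V = measure lebesgue (ball (0::real^'n) e)"
  have V: "V > 0"
    using e by (simp add: V_def)
  have "Lp_ell2_norm p N (\<lambda>k. indicator (ball (0::real^'n) e)) = ereal (sqrt (real N) * V powr inv_exp p)"
    unfolding V_def using e N pqr by (intro Lp_ell2_norm_common_ball) auto
  moreover have "Lp_ell2_norm q N (\<lambda>k. indicator (ball ((- 1 - \<rho>) *\<^sub>R \<alpha> k) e))
      = ereal ((real N * V) powr inv_exp q)"
    unfolding V_def using e N pqr \<rho> by (intro Lp_ell2_norm_separated_balls) (auto intro!: sep)
  ultimately have "ereal ((real N * V) powr inv_exp r / (sqrt (real N) * V powr inv_exp p * (real N * V) powr inv_exp q))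
      \<le> S_opnorm p q r N \<alpha> \<rho>"
    using e N pqr \<rho> V unfolding V_def
    by (intro S_opnorm_ge_balls[where w = "\<lambda>k. (- \<rho>) *\<^sub>R \<alpha> k"] sep) (auto simp: algebra_simps)
  then show ?thesis
    using powr_ratio_sqrt[of "real N" V "inv_exp p" "inv_exp q"] N V pqr(4) by simp
qed

lemma S_opnorm_lower_bound_q:
  fixes \<alpha> :: "nat \<Rightarrow> real^'n"
  assumes pqr: "p > 0" "q > 0" "r > 0" "inv_exp p + inv_exp q = inv_exp r"
    and N: "N \<ge> 1" and inj: "inj_on \<alpha> {..<N}" and \<rho>: "\<rho> > 0"
  shows "ereal (real N powr (inv_exp q - 1/2)) \<le> S_opnorm p q r N \<alpha> \<rho>"
proof -
  obtain e where e: "e > 0" and sep: "\<And>i j c. i < N \<Longrightarrow> j < N \<Longrightarrow> i \<noteq> j \<Longrightarrow> min 1 \<rho> \<le> \<bar>c\<bar> \<Longrightarrow>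
      2 * e \<le> dist (c *\<^sub>R \<alpha> i) (c *\<^sub>R \<alpha> j)"
    using obtain_separation_radius[of "{..<N}" \<alpha> "min 1 \<rho>"] inj \<rho> by auto
  define V where "V = measure lebesgue (ball (0::real^'n) e)"
  have V: "V > 0"
    using e by (simp add: V_def)
  have "Lp_ell2_norm p N (\<lambda>k. indicator (ball ((1 + \<rho>) *\<^sub>R \<alpha> k) e))
      = ereal ((real N * V) powr inv_exp p)"
    unfolding V_def using e N pqr \<rho> by (intro Lp_ell2_norm_separated_balls) (auto intro!: sep)
  moreover have "Lp_ell2_norm q N (\<lambda>k. indicator (ball (0::real^'n) e)) = ereal (sqrt (real N) * V powr inv_exp q)"
    unfolding V_def using e N pqr by (intro Lp_ell2_norm_common_ball) auto
  ultimately have "ereal ((real N * V) powr inv_exp r / ((real N * V) powr inv_exp p * (sqrt (real N) * V powr inv_exp q)))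
      \<le> S_opnorm p q r N \<alpha> \<rho>"
    using e N pqr \<rho> V unfolding V_def
    by (intro S_opnorm_ge_balls[where w = \<alpha>] sep[where c = 1, simplified]) (auto simp: algebra_simps)
  then show ?thesis
    using powr_ratio_sqrt[of "real N" V "inv_exp q" "inv_exp p"] N V pqr(4) by (simp add: ac_simps)
qed

theorem proposition2p3:
  fixes p q r :: ereal and N :: nat and \<alpha> :: "nat \<Rightarrow> real^'n" and \<rho> :: real
  assumes "0 < p" "0 < q" "0 < r"
    and "inv_exp p + inv_exp q = inv_exp r"
    and "N \<ge> 1"
    and "inj_on \<alpha> {..<N}"
    and "\<rho> > 0"
  shows "S_opnorm p q r N \<alpha> \<rho> \<ge>
           ereal (max (real N powr (inv_exp p - 1/2)) (real N powr (inv_exp q - 1/2)))"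
  using S_opnorm_lower_bound_p[OF assms] S_opnorm_lower_bound_q[OF assms] by simp

end
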